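(* Let $p$ be a prime, $d\ge1$, $g\in L^2(\mathbb{Z}_p^d)$ with $\|g\|_2=1$, and $A,B\subseteq\mathbb{Z}_p^d$. Let $E=\operatorname{supp}(g)=\{x: g(x)\neq 0\}$ and assume $|E|=|B|$. Then the Gabor system $\mathcal{G}(g,A,B)$ is an orthonormal basis of $L^2(\mathbb{Z}_p^d)$ if and only if all of the following hold: (i) $|g|=|E|^{-1/2}1_E$; (ii) $(E,B)$ is a spectral pair; (iii) $(E,A)$ is a tiling pair.
   Context: $\mathbb{Z}_p$ is the field of integers mod a prime $p$, $\mathbb{Z}_p^d$ the $d$-dimensional vector space over it, and $x\cdot b=\sum_i x_ib_i$. $\chi(t)=e^{2\pi i t/p}$ for $t\in\mathbb{Z}_p$. $L^2(\mathbb{Z}_p^d)$ is the space of functions $\mathbb{Z}_p^d\to\mathbb{C}$ with inner product $\langle f,h\rangle=\sum_{x\in\mathbb{Z}_p^d} f(x)\overline{h(x)}$ (counting measure). For $g\in L^2(\mathbb{Z}_p^d)$ and $A,B\subseteq\mathbb{Z}_p^d$, the Gabor system is $\mathcal{G}(g,A,B)=\{x\mapsto g(x-a)\chi(x\cdot b)\}_{a\in A,\ b\in B}$ (indexed by pairs $(a,b)$). $1_E$ denotes the indicator function of $E$. A pair $(E,B)$ is a spectral pair if the functions $\{x\mapsto\chi(x\cdot b)\}_{b\in B}$, restricted to $E$, form an orthogonal basis of $L^2(E)$. A pair $(E,A)$ is a tiling pair if $\sum_{a\in A}1_E(x-a)=1$ for all $x\in\mathbb{Z}_p^d$. *)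

theory Defs
  imports "HOL-Analysis.Analysis"
begin

text \<open>Points of Z_p^d are modelled as functions nat => int whose first d
coordinates lie in {0..<p} and whose remaining coordinates are 0.\<close>

definition zp_vecs :: "nat \<Rightarrow> nat \<Rightarrow> (nat \<Rightarrow> int) set" where
  "zp_vecs p d = {x. (\<forall>i<d. 0 \<le> x i \<and> x i < int p) \<and> (\<forall>i\<ge>d. x i = 0)}"

definition vsub :: "nat \<Rightarrow> (nat \<Rightarrow> int) \<Rightarrow> (nat \<Rightarrow> int) \<Rightarrow> (nat \<Rightarrow> int)" where
  "vsub p x a = (\<lambda>i. (x i - a i) mod int p)"

definition dotp :: "nat \<Rightarrow> (nat \<Rightarrow> int) \<Rightarrow> (nat \<Rightarrow> int) \<Rightarrow> int" where
  "dotp d x b = (\<Sum>i<d. x i * b i)"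

definition chi :: "nat \<Rightarrow> int \<Rightarrow> complex" where
  "chi p t = cis (2 * pi * of_int t / of_nat p)"

definition ip :: "(nat \<Rightarrow> int) set \<Rightarrow> ((nat \<Rightarrow> int) \<Rightarrow> complex) \<Rightarrow> ((nat \<Rightarrow> int) \<Rightarrow> complex) \<Rightarrow> complex" where
  "ip S f h = (\<Sum>x\<in>S. f x * cnj (h x))"

definition gabor_atom :: "nat \<Rightarrow> nat \<Rightarrow> ((nat \<Rightarrow> int) \<Rightarrow> complex) \<Rightarrow> (nat \<Rightarrow> int) \<Rightarrow> (nat \<Rightarrow> int) \<Rightarrow> ((nat \<Rightarrow> int) \<Rightarrow> complex)" where
  "gabor_atom p d g a b = (\<lambda>x. g (vsub p x a) * chi p (dotp d x b))"

definition is_onb :: "(nat \<Rightarrow> int) set \<Rightarrow> 'i set \<Rightarrow> ('i \<Rightarrow> (nat \<Rightarrow> int) \<Rightarrow> complex) \<Rightarrow> bool" where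
  "is_onb S I F \<longleftrightarrow>
     (\<forall>i\<in>I. \<forall>j\<in>I. ip S (F i) (F j) = (if i = j then 1 else 0)) \<and>
     (\<forall>f. \<exists>c. \<forall>x\<in>S. f x = (\<Sum>i\<in>I. c i * F i x))"

definition is_ob :: "(nat \<Rightarrow> int) set \<Rightarrow> 'i set \<Rightarrow> ('i \<Rightarrow> (nat \<Rightarrow> int) \<Rightarrow> complex) \<Rightarrow> bool" where
  "is_ob S I F \<longleftrightarrow>
     (\<forall>i\<in>I. ip S (F i) (F i) \<noteq> 0) \<and>
     (\<forall>i\<in>I. \<forall>j\<in>I. i \<noteq> j \<longrightarrow> ip S (F i) (F j) = 0) \<and>
     (\<forall>f. \<exists>c. \<forall>x\<in>S. f x = (\<Sum>i\<in>I. c i * F i x))"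

definition spectral_pair :: "nat \<Rightarrow> nat \<Rightarrow> (nat \<Rightarrow> int) set \<Rightarrow> (nat \<Rightarrow> int) set \<Rightarrow> bool" where
  "spectral_pair p d E B \<longleftrightarrow> is_ob E B (\<lambda>b x. chi p (dotp d x b))"

definition tiling_pair :: "nat \<Rightarrow> nat \<Rightarrow> (nat \<Rightarrow> int) set \<Rightarrow> (nat \<Rightarrow> int) set \<Rightarrow> bool" where
  "tiling_pair p d E A \<longleftrightarrow>
     (\<forall>x\<in>zp_vecs p d. (\<Sum>a\<in>A. indicator E (vsub p x a) :: real) = 1)"

end

theory Submission
  imports Defs
begin

text \<open>If the Gabor system is an orthonormal basis, expanding a point mass at \<open>y\<close> gives
  the pointwise Parseval identity \<open>|B| \<Sum>\<^sub>a |g(y - a)|\<^sup>2 = 1\<close>. Hence the translates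
  \<open>E + a\<close> cover \<open>\<int>\<^sub>p\<^sup>d\<close>, while summing the identity over \<open>y\<close> gives
  \<open>p\<^sup>d = |A| |B| = |A| |E|\<close>; so they cover every point exactly once, i.e. \<open>(E, A)\<close> tiles.
  Then only one translation contributes at each point, which forces \<open>|g|\<^sup>2 = 1/|E|\<close> on \<open>E\<close>,
  and restricting the orthogonality relations and the Gabor expansions to one translate
  \<open>E + a\<^sub>0\<close> turns them into those of the characters on \<open>E\<close>. Conversely, under (i)--(iii)
  atoms with different translations have disjoint supports, atoms with the same translation
  are orthonormal because the characters are orthogonal on \<open>E\<close>, and a function is expanded
  translate by translate after dividing by \<open>g\<close> on \<open>E\<close>.\<close>

definition vadd :: "nat \<Rightarrow> (nat \<Rightarrow> int) \<Rightarrow> (nat \<Rightarrow> int) \<Rightarrow> (nat \<Rightarrow> int)" where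
  "vadd p x a = (\<lambda>i. (x i + a i) mod int p)"

lemma finite_zp_vecs: "finite (zp_vecs p d)"
proof -
  let ?ext = "\<lambda>f i. if i < d then f i else 0"
  have "zp_vecs p d \<subseteq> ?ext ` (PiE {..<d} (\<lambda>_. {0..<int p}))"
  proof
    fix x assume x: "x \<in> zp_vecs p d"
    then have "restrict x {..<d} \<in> PiE {..<d} (\<lambda>_. {0..<int p})"
      by (auto simp: zp_vecs_def)
    moreover have "x = ?ext (restrict x {..<d})"
      using x by (auto simp: zp_vecs_def fun_eq_iff)
    ultimately show "x \<in> ?ext ` (PiE {..<d} (\<lambda>_. {0..<int p}))" by blast
  qed
  then show ?thesis by (rule finite_subset) (auto intro: finite_PiE)
qed

lemma vsub_in_zp_vecs:
  "p > 0 \<Longrightarrow> x \<in> zp_vecs p d \<Longrightarrow> a \<in> zp_vecs p d \<Longrightarrow> vsub p x a \<in> zp_vecs p d"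
  by (auto simp: zp_vecs_def vsub_def)

lemma vadd_in_zp_vecs:
  "p > 0 \<Longrightarrow> x \<in> zp_vecs p d \<Longrightarrow> a \<in> zp_vecs p d \<Longrightarrow> vadd p x a \<in> zp_vecs p d"
  by (auto simp: zp_vecs_def vadd_def)

lemma zp_vecs_mod: "x \<in> zp_vecs p d \<Longrightarrow> x i mod int p = x i"
  by (cases "i < d") (auto simp: zp_vecs_def)

lemma vsub_vadd: "x \<in> zp_vecs p d \<Longrightarrow> vsub p (vadd p x a) a = x"
  by (auto simp: vsub_def vadd_def fun_eq_iff mod_diff_left_eq zp_vecs_mod)

lemma vadd_vsub: "y \<in> zp_vecs p d \<Longrightarrow> vadd p (vsub p y a) a = y"
  by (auto simp: vsub_def vadd_def fun_eq_iff mod_add_left_eq zp_vecs_mod)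

lemma sum_zp_vecs_vadd:
  assumes "p > 0" "a \<in> zp_vecs p d"
  shows "(\<Sum>x\<in>zp_vecs p d. F (vadd p x a)) = (\<Sum>y\<in>zp_vecs p d. F y)"
  by (rule sum.reindex_bij_witness[of _ "\<lambda>y. vsub p y a" "\<lambda>x. vadd p x a"])
     (use assms in \<open>auto simp: vsub_vadd vadd_vsub vsub_in_zp_vecs vadd_in_zp_vecs\<close>)

lemma sum_zp_vecs_vsub:
  assumes "p > 0" "a \<in> zp_vecs p d"
  shows "(\<Sum>y\<in>zp_vecs p d. F (vsub p y a)) = (\<Sum>x\<in>zp_vecs p d. F x)"
  by (rule sum.reindex_bij_witness[of _ "\<lambda>x. vadd p x a" "\<lambda>y. vsub p y a"])
     (use assms in \<open>auto simp: vsub_vadd vadd_vsub vsub_in_zp_vecs vadd_in_zp_vecs\<close>)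

lemma chi_add: "chi p (s + t) = chi p s * chi p t"
  by (simp add: chi_def cis_mult add_divide_distrib distrib_left)

lemma chi_mult_p_eq_1:
  assumes "p > 0"
  shows "chi p (int p * k) = 1"
proof -
  have "2 * pi * of_int (int p * k) / of_nat p = 2 * pi * of_int k"
    using assms by simp
  then show ?thesis unfolding chi_def by simp
qed

lemma norm_chi [simp]: "cmod (chi p t) = 1"
  by (simp add: chi_def)

lemma chi_mult_cnj [simp]: "chi p t * cnj (chi p t) = 1"
  using complex_norm_square[of "chi p t"] by simp

lemma chi_nonzero [simp]: "chi p t \<noteq> 0"
  using norm_chi[of p t] by (auto simp del: norm_chi)

lemma chi_dotp_vadd:
  assumes "p > 0"
  shows "chi p (dotp d (vadd p x a) b) = chi p (dotp d x b) * chi p (dotp d a b)"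
proof -
  have "dotp d (vadd p x a) b
      = dotp d x b + dotp d a b + int p * (\<Sum>i<d. - ((x i + a i) div int p) * b i)"
    unfolding dotp_def vadd_def sum_distrib_left sum.distrib[symmetric]
    by (intro sum.cong refl) (simp add: minus_div_mult_eq_mod[symmetric] algebra_simps)
  then show ?thesis by (simp add: chi_add chi_mult_p_eq_1[OF assms])
qed

lemma ip_chi_self: "ip E (\<lambda>x. chi p (dotp d x b)) (\<lambda>x. chi p (dotp d x b)) = of_nat (card E)"
  by (simp add: ip_def)

lemma card_support_gt_0:
  fixes g :: "'a \<Rightarrow> complex"
  assumes S: "finite S" and norm: "(\<Sum>x\<in>S. (cmod (g x))\<^sup>2) = 1"
    and supp: "E = {x \<in> S. g x \<noteq> 0}"
  shows "card E > 0"
proof -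
  have "E \<noteq> {}"
  proof
    assume "E = {}"
    then have "\<forall>x\<in>S. g x = 0" using supp by blast
    then show False using norm by simp
  qed
  moreover have "finite E" using S supp by simp
  ultimately show ?thesis by (simp add: card_gt_0_iff)
qed

lemma norm_eq_scaled_indicator_iff:
  fixes g :: "'a \<Rightarrow> complex"
  assumes supp: "E = {x \<in> S. g x \<noteq> 0}" and c: "c > 0"
  shows "(\<forall>x\<in>S. cmod (g x) = (if x \<in> E then 1 / sqrt c else 0)) \<longleftrightarrow>
         (\<forall>x\<in>E. (cmod (g x))\<^sup>2 = 1 / c)"
proof -
  have "cmod z = 1 / sqrt c \<longleftrightarrow> (cmod z)\<^sup>2 = 1 / c" for z :: complex
  proof
    assume "cmod z = 1 / sqrt c"
    then show "(cmod z)\<^sup>2 = 1 / c" using c by (simp add: power_divide)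
  next
    assume "(cmod z)\<^sup>2 = 1 / c"
    then have "sqrt ((cmod z)\<^sup>2) = sqrt (1 / c)" by simp
    then show "cmod z = 1 / sqrt c" by (simp add: real_sqrt_divide)
  qed
  then show ?thesis using supp by auto
qed

lemma onb_coefficient_eq_ip:
  assumes onb: "is_onb S I F" and I: "finite I" and j: "j \<in> I"
    and f: "\<forall>x\<in>S. f x = (\<Sum>i\<in>I. c i * F i x)"
  shows "ip S f (F j) = c j"
proof -
  have "ip S f (F j) = (\<Sum>x\<in>S. (\<Sum>i\<in>I. c i * F i x) * cnj (F j x))"
    unfolding ip_def using f by (intro sum.cong) auto
  also have "\<dots> = (\<Sum>i\<in>I. c i * ip S (F i) (F j))"
    unfolding ip_def sum_distrib_right sum_distrib_left
    by (subst sum.swap) (simp add: mult.assoc)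
  also have "\<dots> = (\<Sum>i\<in>I. if i = j then c i else 0)"
    using onb j unfolding is_onb_def by (intro sum.cong) auto
  also have "\<dots> = c j" using I j by simp
  finally show ?thesis .
qed

lemma onb_pointwise_parseval:
  assumes onb: "is_onb S I F" and S: "finite S" and I: "finite I" and y: "y \<in> S"
  shows "(\<Sum>i\<in>I. (cmod (F i y))\<^sup>2) = 1"
proof -
  define \<delta> where "\<delta> = (\<lambda>x. if x = y then 1 else 0 :: complex)"
  obtain c where c: "\<forall>x\<in>S. \<delta> x = (\<Sum>i\<in>I. c i * F i x)"
    using onb unfolding is_onb_def by blast
  have "ip S \<delta> (F i) = cnj (F i y)" for i
    unfolding ip_def \<delta>_def using y S
    by (subst sum.cong[OF refl, of _ _ "\<lambda>x. if x = y then cnj (F i y) else 0"]) auto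
  then have coeff: "c i = cnj (F i y)" if "i \<in> I" for i
    using onb_coefficient_eq_ip[OF onb I that c] by simp
  have "(1::complex) = \<delta> y" by (simp add: \<delta>_def)
  also have "\<dots> = (\<Sum>i\<in>I. c i * F i y)" using c y by blast
  also have "\<dots> = (\<Sum>i\<in>I. cnj (F i y) * F i y)" using coeff by simp
  also have "\<dots> = of_real (\<Sum>i\<in>I. (cmod (F i y))\<^sup>2)"
    unfolding of_real_sum by (intro sum.cong refl) (simp only: complex_norm_square mult.commute)
  finally show ?thesis by (metis of_real_eq_1_iff)
qed

lemma tiling_pair_unique:
  assumes tile: "tiling_pair p d E A" and A: "finite A" and y: "y \<in> zp_vecs p d"
    and "a \<in> A" "a' \<in> A" "vsub p y a \<in> E" "vsub p y a' \<in> E"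
  shows "a = a'"
proof (rule ccontr)
  assume "a \<noteq> a'"
  then have "(2::real) = (\<Sum>c\<in>{a, a'}. indicator E (vsub p y c))"
    using assms by simp
  also have "\<dots> \<le> (\<Sum>c\<in>A. indicator E (vsub p y c))"
    by (rule sum_mono2) (use assms in auto)
  also have "\<dots> = 1"
    using tile y unfolding tiling_pair_def by blast
  finally show False by simp
qed

lemma tiling_pair_covers:
  assumes tile: "tiling_pair p d E A" and y: "y \<in> zp_vecs p d"
  obtains a where "a \<in> A" "vsub p y a \<in> E"
proof -
  have "(\<Sum>c\<in>A. indicator E (vsub p y c) :: real) \<noteq> 0"
    using tile y unfolding tiling_pair_def by simp
  then show ?thesis using that by (meson indicator_simps(2) sum.neutral)
qed

lemma tiling_pair_sum_single_translate:
  assumes tile: "tiling_pair p d E A" and A: "finite A" and y: "y \<in> zp_vecs p d"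
    and a0: "a0 \<in> A" "vsub p y a0 \<in> E"
    and h: "\<And>a. a \<in> A \<Longrightarrow> vsub p y a \<notin> E \<Longrightarrow> h a = 0"
  shows "(\<Sum>a\<in>A. h a) = h a0"
proof -
  have "h a = 0" if "a \<in> A - {a0}" for a
    using h tiling_pair_unique[OF tile A y] a0 that by blast
  then show ?thesis
    using A a0 by (simp add: sum.remove)
qed

text \<open>Every point is covered by at least one translate, while on average it is covered
  exactly once; hence it is covered exactly once.\<close>
lemma tiling_pair_if_covering:
  assumes p: "p > 0" and AZ: "A \<subseteq> zp_vecs p d" and EZ: "E \<subseteq> zp_vecs p d"
    and cover: "\<And>y. y \<in> zp_vecs p d \<Longrightarrow> \<exists>a\<in>A. vsub p y a \<in> E"
    and count: "card A * card E = card (zp_vecs p d)"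
  shows "tiling_pair p d E A"
proof -
  let ?Z = "zp_vecs p d"
  define K where "K y = (\<Sum>a\<in>A. indicator E (vsub p y a) :: real)" for y
  have A: "finite A" using AZ finite_subset finite_zp_vecs by blast
  have K_ge: "K y \<ge> 1" if y: "y \<in> ?Z" for y
  proof -
    obtain a where a: "a \<in> A" "vsub p y a \<in> E" using cover[OF y] by blast
    have "indicator E (vsub p y a) \<le> K y"
      unfolding K_def by (rule member_le_sum) (use a A in auto)
    then show ?thesis using a by simp
  qed
  have "(\<Sum>y\<in>?Z. K y) = (\<Sum>a\<in>A. \<Sum>y\<in>?Z. indicator E (vsub p y a) :: real)"
    unfolding K_def by (rule sum.swap)
  also have "\<dots> = (\<Sum>a\<in>A. \<Sum>x\<in>?Z. indicator E x :: real)"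
    using AZ by (intro sum.cong refl sum_zp_vecs_vsub[OF p]) auto
  also have "\<dots> = real (card A) * real (card E)"
    using EZ finite_zp_vecs by (simp add: sum.subset_diff[of E ?Z])
  finally have "(\<Sum>y\<in>?Z. K y - 1) = 0"
    using count by (simp add: sum_subtractf flip: of_nat_mult)
  then have "\<forall>y\<in>?Z. K y - 1 = 0"
    using sum_nonneg_eq_0_iff[OF finite_zp_vecs, of _ _ "\<lambda>y. K y - 1"] K_ge by simp
  then show ?thesis unfolding tiling_pair_def K_def by simp
qed

lemma vsub_in_support_iff:
  assumes p: "p > 0" and supp: "E = {x \<in> zp_vecs p d. g x \<noteq> 0}"
    and "y \<in> zp_vecs p d" "a \<in> zp_vecs p d"
  shows "vsub p y a \<in> E \<longleftrightarrow> g (vsub p y a) \<noteq> 0"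
  using vsub_in_zp_vecs[OF p assms(3,4)] supp by blast

lemma gabor_ip_same_translate:
  assumes p: "p > 0" and a: "a \<in> zp_vecs p d" and supp: "E = {x \<in> zp_vecs p d. g x \<noteq> 0}"
    and flat: "\<forall>x\<in>E. (cmod (g x))\<^sup>2 = 1 / real (card E)"
  shows "ip (zp_vecs p d) (gabor_atom p d g a b) (gabor_atom p d g a b') =
     chi p (dotp d a b) * cnj (chi p (dotp d a b')) / of_nat (card E) *
       ip E (\<lambda>x. chi p (dotp d x b)) (\<lambda>x. chi p (dotp d x b'))"
proof -
  let ?Z = "zp_vecs p d"
  let ?c = "chi p (dotp d a b) * cnj (chi p (dotp d a b')) / of_nat (card E)"
  let ?h = "\<lambda>x. chi p (dotp d x b) * cnj (chi p (dotp d x b'))"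
  have g_sq: "g x * cnj (g x) = (if x \<in> E then 1 / of_nat (card E) else 0)" if "x \<in> ?Z" for x
  proof (cases "x \<in> E")
    case True
    then have "g x * cnj (g x) = of_real (1 / real (card E))"
      using flat complex_norm_square[of "g x"] by (metis of_real_power)
    then show ?thesis using True by simp
  qed (use supp that in auto)
  have "ip ?Z (gabor_atom p d g a b) (gabor_atom p d g a b') =
      (\<Sum>x\<in>?Z. g (vsub p (vadd p x a) a) * chi p (dotp d (vadd p x a) b) *
          cnj (g (vsub p (vadd p x a) a) * chi p (dotp d (vadd p x a) b')))"
    unfolding ip_def gabor_atom_def by (rule sum_zp_vecs_vadd[OF p a, symmetric])
  also have "\<dots> = (\<Sum>x\<in>?Z. g x * cnj (g x) * (chi p (dotp d a b) * cnj (chi p (dotp d a b'))) * ?h x)"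
    by (intro sum.cong refl) (simp add: vsub_vadd chi_dotp_vadd[OF p] algebra_simps)
  also have "\<dots> = (\<Sum>x\<in>?Z. if x \<in> E then ?c * ?h x else 0)"
    by (intro sum.cong refl) (simp add: g_sq)
  also have "\<dots> = (\<Sum>x\<in>E. ?c * ?h x)"
  proof -
    have "E \<subseteq> ?Z" using supp by blast
    then show ?thesis
      by (simp only: sum.inter_restrict[OF finite_zp_vecs, symmetric] Int_absorb1)
  qed
  also have "\<dots> = ?c * ip E (\<lambda>x. chi p (dotp d x b)) (\<lambda>x. chi p (dotp d x b'))"
    unfolding ip_def by (simp add: sum_distrib_left)
  finally show ?thesis .
qed

lemma gabor_ip_distinct_translates:
  assumes p: "p > 0" and supp: "E = {x \<in> zp_vecs p d. g x \<noteq> 0}"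
    and tile: "tiling_pair p d E A" and A: "A \<subseteq> zp_vecs p d"
    and "a \<in> A" "a' \<in> A" "a \<noteq> a'"
  shows "ip (zp_vecs p d) (gabor_atom p d g a b) (gabor_atom p d g a' b') = 0"
  unfolding ip_def gabor_atom_def
proof (intro sum.neutral ballI)
  fix y assume y: "y \<in> zp_vecs p d"
  have "vsub p y a \<notin> E \<or> vsub p y a' \<notin> E"
    using tiling_pair_unique[OF tile finite_subset[OF A finite_zp_vecs] y] assms(5-7) by blast
  moreover have "a \<in> zp_vecs p d" "a' \<in> zp_vecs p d" using assms(5,6) A by auto
  ultimately have "g (vsub p y a) = 0 \<or> g (vsub p y a') = 0"
    using vsub_in_support_iff[OF p supp y] by blast
  then show "g (vsub p y a) * chi p (dotp d y b) * cnj (g (vsub p y a') * chi p (dotp d y b')) = 0"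
    by auto
qed

text \<open>On the translate \<open>E + a\<^sub>0\<close> only the atoms with translation \<open>a\<^sub>0\<close> survive.\<close>
lemma gabor_sum_on_translate:
  assumes p: "p > 0" and supp: "E = {x \<in> zp_vecs p d. g x \<noteq> 0}"
    and tile: "tiling_pair p d E A" and A: "A \<subseteq> zp_vecs p d"
    and a0: "a0 \<in> A" and x: "x \<in> E"
  shows "(\<Sum>i\<in>A \<times> B. c i * (\<lambda>(a, b). gabor_atom p d g a b) i (vadd p x a0)) =
    g x * (\<Sum>b\<in>B. c (a0, b) * chi p (dotp d a0 b) * chi p (dotp d x b))"
proof -
  let ?y = "vadd p x a0"
  have xZ: "x \<in> zp_vecs p d" and a0Z: "a0 \<in> zp_vecs p d" using x supp a0 A by auto
  have y: "?y \<in> zp_vecs p d" and yx: "vsub p ?y a0 = x"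
    using vadd_in_zp_vecs[OF p xZ a0Z] vsub_vadd[OF xZ] by auto
  have "(\<Sum>i\<in>A \<times> B. c i * (\<lambda>(a, b). gabor_atom p d g a b) i ?y)
      = (\<Sum>a\<in>A. \<Sum>b\<in>B. c (a, b) * gabor_atom p d g a b ?y)"
    by (simp add: sum.cartesian_product split_def)
  also have "\<dots> = (\<Sum>b\<in>B. c (a0, b) * gabor_atom p d g a0 b ?y)"
  proof (rule tiling_pair_sum_single_translate[OF tile finite_subset[OF A finite_zp_vecs] y a0])
    show "vsub p ?y a0 \<in> E" using yx x by simp
    fix a assume "a \<in> A" "vsub p ?y a \<notin> E"
    then have "g (vsub p ?y a) = 0" using vsub_in_support_iff[OF p supp y] A by blast
    then show "(\<Sum>b\<in>B. c (a, b) * gabor_atom p d g a b ?y) = 0" by (simp add: gabor_atom_def)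
  qed
  also have "\<dots> = g x * (\<Sum>b\<in>B. c (a0, b) * chi p (dotp d a0 b) * chi p (dotp d x b))"
    unfolding sum_distrib_left gabor_atom_def yx
    by (intro sum.cong refl) (simp add: chi_dotp_vadd[OF p] algebra_simps)
  finally show ?thesis .
qed

lemma gabor_onb_pointwise_parseval:
  assumes p: "p > 0" and A: "A \<subseteq> zp_vecs p d" and B: "B \<subseteq> zp_vecs p d"
    and onb: "is_onb (zp_vecs p d) (A \<times> B) (\<lambda>(a, b). gabor_atom p d g a b)"
    and y: "y \<in> zp_vecs p d"
  shows "real (card B) * (\<Sum>a\<in>A. (cmod (g (vsub p y a)))\<^sup>2) = 1"
proof -
  have "finite (A \<times> B)"
    using A B finite_subset[OF _ finite_zp_vecs] by blast
  from onb_pointwise_parseval[OF onb finite_zp_vecs this y]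
  have "(\<Sum>a\<in>A. \<Sum>b\<in>B. (cmod (g (vsub p y a)))\<^sup>2) = 1"
    by (simp add: sum.cartesian_product' gabor_atom_def norm_mult)
  then show ?thesis by (simp add: sum_distrib_left)
qed

lemma gabor_ip_if_tiling_spectral:
  assumes p: "p > 0" and A: "A \<subseteq> zp_vecs p d"
    and supp: "E = {x \<in> zp_vecs p d. g x \<noteq> 0}" and card_E: "card E > 0"
    and flat: "\<forall>x\<in>E. (cmod (g x))\<^sup>2 = 1 / real (card E)"
    and spectral: "spectral_pair p d E B" and tile: "tiling_pair p d E A"
    and mem: "a \<in> A" "b \<in> B" "a' \<in> A" "b' \<in> B"
  shows "ip (zp_vecs p d) (gabor_atom p d g a b) (gabor_atom p d g a' b') =
    (if (a, b) = (a', b') then 1 else 0)"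
proof (cases "a = a'")
  case False
  then show ?thesis using gabor_ip_distinct_translates[OF p supp tile A mem(1,3)] by simp
next
  case a_eq: True
  have "a \<in> zp_vecs p d" using mem A by blast
  note same = gabor_ip_same_translate[OF p this supp flat, of b b']
  show ?thesis
  proof (cases "b = b'")
    case True
    then show ?thesis using same a_eq card_E by (simp add: ip_chi_self)
  next
    case False
    then have "ip E (\<lambda>x. chi p (dotp d x b)) (\<lambda>x. chi p (dotp d x b')) = 0"
      using spectral mem(2,4) unfolding spectral_pair_def is_ob_def by blast
    then show ?thesis using same a_eq False by simp
  qed
qed

lemma gabor_onb_if_tiling_spectral:
  assumes p: "p > 0" and A: "A \<subseteq> zp_vecs p d"
    and supp: "E = {x \<in> zp_vecs p d. g x \<noteq> 0}" and card_E: "card E > 0"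
    and flat: "\<forall>x\<in>E. (cmod (g x))\<^sup>2 = 1 / real (card E)"
    and spectral: "spectral_pair p d E B" and tile: "tiling_pair p d E A"
  shows "is_onb (zp_vecs p d) (A \<times> B) (\<lambda>(a, b). gabor_atom p d g a b)"
proof -
  let ?Z = "zp_vecs p d"
  let ?G = "\<lambda>(a, b). gabor_atom p d g a b"
  have orth: "ip ?Z (?G i) (?G j) = (if i = j then 1 else 0)"
    if ij: "i \<in> A \<times> B" "j \<in> A \<times> B" for i j
  proof -
    obtain a b a' b' where "i = (a, b)" "j = (a', b')"
      and "a \<in> A" "b \<in> B" "a' \<in> A" "b' \<in> B"
      using ij by blast
    then show ?thesis
      using gabor_ip_if_tiling_spectral[OF p A supp card_E flat spectral tile] by simp
  qed
  from spectral have span_E: "\<And>f. \<exists>c. \<forall>x\<in>E. f x = (\<Sum>b\<in>B. c b * chi p (dotp d x b))"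
    unfolding spectral_pair_def is_ob_def by auto
  have span: "\<exists>c. \<forall>y\<in>?Z. f y = (\<Sum>i\<in>A \<times> B. c i * ?G i y)" for f
  proof -
    have "\<exists>C. \<forall>a. \<forall>x\<in>E. f (vadd p x a) / g x = (\<Sum>b\<in>B. C a b * chi p (dotp d x b))"
      by (rule choice) (intro allI span_E)
    then obtain C where C: "\<And>a x. x \<in> E \<Longrightarrow>
        f (vadd p x a) / g x = (\<Sum>b\<in>B. C a b * chi p (dotp d x b))"
      by blast
    \<comment> \<open>\<open>cnj (\<chi>(a\<cdot>b))\<close> cancels the phase that translation by \<open>a\<close> adds to the modulation.\<close>
    define c where "c = (\<lambda>(a, b). C a b * cnj (chi p (dotp d a b)))"
    have "f y = (\<Sum>i\<in>A \<times> B. c i * ?G i y)" if y: "y \<in> ?Z" for y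
    proof -
      obtain a0 where a0: "a0 \<in> A" "vsub p y a0 \<in> E" using tiling_pair_covers[OF tile y] .
      define x where "x = vsub p y a0"
      have x: "x \<in> E" and y_eq: "y = vadd p x a0"
        using a0 vadd_vsub[OF y] unfolding x_def by auto
      have "(\<Sum>i\<in>A \<times> B. c i * ?G i y)
          = g x * (\<Sum>b\<in>B. c (a0, b) * chi p (dotp d a0 b) * chi p (dotp d x b))"
        unfolding y_eq by (rule gabor_sum_on_translate[OF p supp tile A a0(1) x])
      also have "\<dots> = g x * (f y / g x)"
        using C[OF x, of a0] y_eq by (simp add: c_def mult.commute mult.left_commute)
      also have "\<dots> = f y" using x supp by simp
      finally show ?thesis by simp
    qed
    then show ?thesis by blast
  qed
  show ?thesis unfolding is_onb_def using orth span by blast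
qed

lemma gabor_onb_imp_tiling_pair:
  assumes p: "p > 0" and A: "A \<subseteq> zp_vecs p d" and B: "B \<subseteq> zp_vecs p d"
    and norm: "(\<Sum>x\<in>zp_vecs p d. (cmod (g x))\<^sup>2) = 1"
    and supp: "E = {x \<in> zp_vecs p d. g x \<noteq> 0}" and card: "card E = card B"
    and onb: "is_onb (zp_vecs p d) (A \<times> B) (\<lambda>(a, b). gabor_atom p d g a b)"
  shows "tiling_pair p d E A"
proof (rule tiling_pair_if_covering[OF p A])
  let ?Z = "zp_vecs p d"
  note mass = gabor_onb_pointwise_parseval[OF p A B onb]
  show "E \<subseteq> ?Z" using supp by blast
  show "\<exists>a\<in>A. vsub p y a \<in> E" if y: "y \<in> ?Z" for y
  proof -
    have "(\<Sum>a\<in>A. (cmod (g (vsub p y a)))\<^sup>2) \<noteq> 0"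
      using mass[OF y] by (metis mult_zero_right zero_neq_one)
    then obtain a where a: "a \<in> A" "(cmod (g (vsub p y a)))\<^sup>2 \<noteq> 0"
      by (rule sum.not_neutral_contains_not_neutral)
    then have "vsub p y a \<in> E"
      using vsub_in_support_iff[OF p supp y] A by auto
    with a show ?thesis by blast
  qed
  have "real (card ?Z) = (\<Sum>y\<in>?Z. 1)" by simp
  also have "\<dots> = (\<Sum>y\<in>?Z. real (card B) * (\<Sum>a\<in>A. (cmod (g (vsub p y a)))\<^sup>2))"
    using mass by (intro sum.cong refl) simp
  also have "\<dots> = real (card B) * (\<Sum>y\<in>?Z. \<Sum>a\<in>A. (cmod (g (vsub p y a)))\<^sup>2)"
    by (simp add: sum_distrib_left)
  also have "\<dots> = real (card B) * (\<Sum>a\<in>A. \<Sum>y\<in>?Z. (cmod (g (vsub p y a)))\<^sup>2)"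
    by (subst sum.swap) (rule refl)
  also have "\<dots> = real (card B) * real (card A)"
  proof -
    have "(\<Sum>y\<in>?Z. (cmod (g (vsub p y a)))\<^sup>2) = 1" if "a \<in> A" for a
      using sum_zp_vecs_vsub[OF p, of a d "\<lambda>x. (cmod (g x))\<^sup>2"] that A norm by auto
    then show ?thesis by simp
  qed
  finally show "card A * card E = card ?Z"
    using card by (simp flip: of_nat_mult)
qed

lemma gabor_onb_imp_flat_modulus:
  assumes p: "p > 0" and A: "A \<subseteq> zp_vecs p d" and B: "B \<subseteq> zp_vecs p d"
    and supp: "E = {x \<in> zp_vecs p d. g x \<noteq> 0}" and card: "card E = card B"
    and onb: "is_onb (zp_vecs p d) (A \<times> B) (\<lambda>(a, b). gabor_atom p d g a b)"
    and tile: "tiling_pair p d E A"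
  shows "\<forall>x\<in>E. (cmod (g x))\<^sup>2 = 1 / real (card E)"
proof
  fix x assume x: "x \<in> E"
  have fin_A: "finite A" by (rule finite_subset[OF A finite_zp_vecs])
  have xZ: "x \<in> zp_vecs p d" using x supp by blast
  obtain a0 where a0: "a0 \<in> A" using tiling_pair_covers[OF tile xZ] by blast
  have a0Z: "a0 \<in> zp_vecs p d" using a0 A by blast
  let ?y = "vadd p x a0"
  have y: "?y \<in> zp_vecs p d" and yx: "vsub p ?y a0 = x"
    using vadd_in_zp_vecs[OF p xZ a0Z] vsub_vadd[OF xZ] by auto
  have "(\<Sum>a\<in>A. (cmod (g (vsub p ?y a)))\<^sup>2) = (cmod (g (vsub p ?y a0)))\<^sup>2"
    by (rule tiling_pair_sum_single_translate[OF tile fin_A y a0])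
       (use x yx vsub_in_support_iff[OF p supp y] A in auto)
  then have "real (card B) * (cmod (g x))\<^sup>2 = 1"
    using gabor_onb_pointwise_parseval[OF p A B onb y] yx by simp
  then show "(cmod (g x))\<^sup>2 = 1 / real (card E)"
    using card by (auto simp: eq_divide_eq mult.commute)
qed

lemma gabor_onb_imp_spectral_pair:
  assumes p: "p > 0" and A: "A \<subseteq> zp_vecs p d"
    and supp: "E = {x \<in> zp_vecs p d. g x \<noteq> 0}" and card_E: "card E > 0"
    and flat: "\<forall>x\<in>E. (cmod (g x))\<^sup>2 = 1 / real (card E)"
    and onb: "is_onb (zp_vecs p d) (A \<times> B) (\<lambda>(a, b). gabor_atom p d g a b)"
    and tile: "tiling_pair p d E A"
  shows "spectral_pair p d E B"
proof -
  let ?Z = "zp_vecs p d"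
  let ?G = "\<lambda>(a, b). gabor_atom p d g a b"
  from card_E obtain x0 where "x0 \<in> E" by (metis card.empty ex_in_conv less_irrefl)
  then have "x0 \<in> ?Z" using supp by blast
  then obtain a0 where a0: "a0 \<in> A" by (rule tiling_pair_covers[OF tile])
  have a0Z: "a0 \<in> ?Z" using a0 A by blast
  have orth: "ip E (\<lambda>x. chi p (dotp d x b)) (\<lambda>x. chi p (dotp d x b')) = 0"
    if "b \<in> B" "b' \<in> B" "b \<noteq> b'" for b b'
  proof -
    have "(a0, b) \<in> A \<times> B" "(a0, b') \<in> A \<times> B" using a0 that by auto
    then have "ip ?Z (?G (a0, b)) (?G (a0, b')) = 0"
      using onb that(3) unfolding is_onb_def by simp
    then show ?thesis
      using gabor_ip_same_translate[OF p a0Z supp flat, of b b'] card_E by simp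
  qed
  have span: "\<exists>c. \<forall>x\<in>E. f x = (\<Sum>b\<in>B. c b * chi p (dotp d x b))" for f
  proof -
    let ?f = "\<lambda>y. g (vsub p y a0) * f (vsub p y a0)"
    have "\<exists>c. \<forall>y\<in>?Z. ?f y = (\<Sum>i\<in>A \<times> B. c i * ?G i y)"
      using onb unfolding is_onb_def by (rule conjunct2[THEN spec])
    then obtain c where c: "\<forall>y\<in>?Z. ?f y = (\<Sum>i\<in>A \<times> B. c i * ?G i y)"
      by blast
    have "f x = (\<Sum>b\<in>B. c (a0, b) * chi p (dotp d a0 b) * chi p (dotp d x b))" if x: "x \<in> E" for x
    proof -
      have xZ: "x \<in> ?Z" and gx: "g x \<noteq> 0" using x supp by blast+
      have "g x * f x = (\<Sum>i\<in>A \<times> B. c i * ?G i (vadd p x a0))"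
        using c[rule_format, OF vadd_in_zp_vecs[OF p xZ a0Z]] by (simp only: vsub_vadd[OF xZ])
      also have "\<dots> = g x * (\<Sum>b\<in>B. c (a0, b) * chi p (dotp d a0 b) * chi p (dotp d x b))"
        by (rule gabor_sum_on_translate[OF p supp tile A a0 x])
      finally show ?thesis using gx by simp
    qed
    then show ?thesis
      by (intro exI[of _ "\<lambda>b. c (a0, b) * chi p (dotp d a0 b)"]) simp
  qed
  show ?thesis
    unfolding spectral_pair_def is_ob_def using orth span card_E by (simp add: ip_chi_self)
qed

theorem theorem1p3:
  fixes p d :: nat and g :: "(nat \<Rightarrow> int) \<Rightarrow> complex" and A B E :: "(nat \<Rightarrow> int) set"
  assumes "prime p" and "d \<ge> 1"
    and "A \<subseteq> zp_vecs p d" and "B \<subseteq> zp_vecs p d"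
    and "(\<Sum>x\<in>zp_vecs p d. (cmod (g x))\<^sup>2) = 1"
    and "E = {x \<in> zp_vecs p d. g x \<noteq> 0}"
    and "card E = card B"
  shows "is_onb (zp_vecs p d) (A \<times> B) (\<lambda>(a, b). gabor_atom p d g a b) \<longleftrightarrow>
           (\<forall>x\<in>zp_vecs p d. cmod (g x) = (if x \<in> E then 1 / sqrt (real (card E)) else 0))
           \<and> spectral_pair p d E B
           \<and> tiling_pair p d E A"
proof -
  have p: "p > 0" using assms(1) by (rule prime_gt_0_nat)
  have card_E: "card E > 0" by (rule card_support_gt_0[OF finite_zp_vecs assms(5,6)])
  let ?onb = "is_onb (zp_vecs p d) (A \<times> B) (\<lambda>(a, b). gabor_atom p d g a b)"
  let ?flat = "\<forall>x\<in>E. (cmod (g x))\<^sup>2 = 1 / real (card E)"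
  have "real (card E) > 0" using card_E by simp
  note flat_iff = norm_eq_scaled_indicator_iff[OF assms(6) this]
  show ?thesis
    unfolding flat_iff
  proof
    assume onb: ?onb
    have tile: "tiling_pair p d E A"
      by (rule gabor_onb_imp_tiling_pair[OF p assms(3-7) onb])
    have flat: ?flat
      by (rule gabor_onb_imp_flat_modulus[OF p assms(3,4,6,7) onb tile])
    show "?flat \<and> spectral_pair p d E B \<and> tiling_pair p d E A"
      using gabor_onb_imp_spectral_pair[OF p assms(3,6) card_E flat onb tile] flat tile by blast
  next
    assume "?flat \<and> spectral_pair p d E B \<and> tiling_pair p d E A"
    then show ?onb
      using gabor_onb_if_tiling_spectral[OF p assms(3,6) card_E] by blast
  qed
qed

end
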